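(* Let $T:[0,1]\to[0,1]$ be a uniform-distribution-preserving transformation that is continuously differentiable on an interval $(a,b)\subset[0,1]$. Then $T'(x)\neq0$ for all $x\in(a,b)$ and $T$ is strictly monotone on $(a,b)$.
   Context: $T$ is uniform-distribution-preserving if $T(U)\sim\mathcal{U}(0,1)$ whenever $U\sim\mathcal{U}(0,1)$. *)

theory Defs
  imports "HOL-Analysis.Analysis"
begin

definition unif01 :: "real measure" where
  "unif01 = uniform_measure lborel {0..1}"

text \<open>The underlying probability space for U ~ U(0,1): Lebesgue (Borel) measure on [0,1].
  Only the values of T on [0,1] matter.\<close>
definition unit_space :: "real measure" where
  "unit_space = restrict_space lborel {0..1}"

definition unif_preserving :: "(real \<Rightarrow> real) \<Rightarrow> bool" where
  "unif_preserving T \<longleftrightarrow> T \<in> borel_measurable unit_space \<and> distr unit_space borel T = unif01"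

end

theory Submission
  imports Defs
begin

text \<open>If \<open>T(U)\<close> is uniform, a Borel set containing \<open>T([c,d])\<close> has a preimage containing
  \<open>[c,d]\<close>, so its measure within \<open>[0,1]\<close> is at least \<open>d - c\<close>: no subinterval of \<open>[0,1]\<close> is
  mapped into a shorter interval. Comparing \<open>T\<close> near an interior point \<open>x\<close> with its
  linearisation therefore forces \<open>\<bar>T'(x)\<bar> \<ge> 1\<close>. A function whose derivative never vanishes on
  an interval is injective there by Rolle's theorem, and a continuous injective function on an
  interval is strictly monotone.\<close>

lemma emeasure_unif01:
  assumes "S \<in> sets borel"
  shows "emeasure unif01 S = emeasure lborel (S \<inter> {0..1})"
  using assms unfolding unif01_def by (simp add: Int_commute divide_ennreal_def)

lemma unif_preserving_emeasure_le:
  assumes udp: "unif_preserving T"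
    and A: "A \<in> sets borel" "A \<subseteq> {0..1}"
    and S: "S \<in> sets borel" "T ` A \<subseteq> S"
  shows "emeasure lborel A \<le> emeasure lborel (S \<inter> {0..1})"
proof -
  have meas: "T \<in> borel_measurable unit_space" and distr: "distr unit_space borel T = unif01"
    using udp unfolding unif_preserving_def by auto
  have space: "space unit_space = {0..1}"
    unfolding unit_space_def by simp
  have "emeasure lborel A = emeasure unit_space A"
    unfolding unit_space_def using A by (simp add: emeasure_restrict_space)
  also have "\<dots> \<le> emeasure unit_space (T -` S \<inter> space unit_space)"
    using A S space by (intro emeasure_mono measurable_sets[OF meas]) auto
  also have "\<dots> = emeasure unif01 S"
    using S by (simp add: emeasure_distr[OF meas] flip: distr)
  also have "\<dots> = emeasure lborel (S \<inter> {0..1})"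
    using S(1) by (rule emeasure_unif01)
  finally show ?thesis .
qed

lemma unif_preserving_interval_image_length:
  assumes udp: "unif_preserving T"
    and cd: "0 \<le> c" "c \<le> d" "d \<le> 1"
    and image: "T ` {c..d} \<subseteq> {u..v}"
  shows "d - c \<le> v - u"
proof -
  have "u \<le> v"
    using image cd by fastforce
  have "ennreal (d - c) = emeasure lborel {c..d}"
    using cd by simp
  also have "\<dots> \<le> emeasure lborel ({u..v} \<inter> {0..1})"
    using cd image by (intro unif_preserving_emeasure_le[OF udp]) auto
  also have "\<dots> \<le> emeasure lborel {u..v}"
    by (intro emeasure_mono) auto
  also have "\<dots> = ennreal (v - u)"
    using \<open>u \<le> v\<close> by simp
  finally show ?thesis
    using \<open>u \<le> v\<close> by (simp add: ennreal_le_iff)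
qed

lemma unif_preserving_DERIV_abs_ge_1:
  assumes udp: "unif_preserving T"
    and x: "x \<in> {0<..<1}"
    and deriv: "(T has_real_derivative D) (at x)"
  shows "1 \<le> \<bar>D\<bar>"
proof (rule ccontr)
  assume "\<not> 1 \<le> \<bar>D\<bar>"
  define k where "k = (1 + \<bar>D\<bar>) / 2"
  have "\<bar>D\<bar> < k" "k < 1"
    using \<open>\<not> 1 \<le> \<bar>D\<bar>\<close> unfolding k_def by auto
  have "((\<lambda>y. \<bar>(T y - T x) / (y - x)\<bar>) \<longlongrightarrow> \<bar>D\<bar>) (at x)"
    using deriv unfolding has_field_derivative_iff by (rule tendsto_rabs)
  then have "\<forall>\<^sub>F y in at x. \<bar>(T y - T x) / (y - x)\<bar> < k"
    using \<open>\<bar>D\<bar> < k\<close> by (rule order_tendstoD)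
  then obtain \<delta> where "\<delta> > 0"
    and slope: "\<And>y. y \<noteq> x \<Longrightarrow> \<bar>y - x\<bar> < \<delta> \<Longrightarrow> \<bar>(T y - T x) / (y - x)\<bar> < k"
    unfolding eventually_at by (auto simp: dist_real_def)
  define h where "h = min (\<delta> / 2) (min x (1 - x))"
  have "0 < h" "h < \<delta>" "0 \<le> x - h" "x + h \<le> 1"
    using \<open>\<delta> > 0\<close> x unfolding h_def by auto
  have "T ` {x - h..x + h} \<subseteq> {T x - k * h..T x + k * h}"
  proof
    fix z assume "z \<in> T ` {x - h..x + h}"
    then obtain y where y: "\<bar>y - x\<bar> \<le> h" and z: "z = T y"
      by (force simp: abs_le_iff)
    have "\<bar>T y - T x\<bar> \<le> k * \<bar>y - x\<bar>"
    proof (cases "y = x")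
      case False
      then show ?thesis
        using slope[of y] y \<open>h < \<delta>\<close> by (simp add: abs_divide divide_less_eq)
    qed simp
    also have "\<dots> \<le> k * h"
      using y \<open>\<bar>D\<bar> < k\<close> by (intro mult_left_mono) auto
    finally show "z \<in> {T x - k * h..T x + k * h}"
      using z by (auto simp: abs_le_iff)
  qed
  then have "(x + h) - (x - h) \<le> (T x + k * h) - (T x - k * h)"
    using \<open>0 < h\<close> \<open>0 \<le> x - h\<close> \<open>x + h \<le> 1\<close>
    by (intro unif_preserving_interval_image_length[OF udp]) auto
  then show False
    using \<open>0 < h\<close> \<open>k < 1\<close> by (simp add: mult_less_cancel_right1)
qed

lemma inj_on_if_DERIV_nonzero:
  fixes f f' :: "real \<Rightarrow> real"
  assumes S: "is_interval S"
    and deriv: "\<And>x. x \<in> S \<Longrightarrow> (f has_real_derivative f' x) (at x)"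
    and nonzero: "\<And>x. x \<in> S \<Longrightarrow> f' x \<noteq> 0"
  shows "inj_on f S"
proof (rule linorder_inj_onI')
  fix x y assume "x \<in> S" "y \<in> S" "x < y"
  then have sub: "{x..y} \<subseteq> S"
    using mem_is_interval_1_I[OF S] by (meson atLeastAtMost_iff subsetI)
  then have deriv_xy: "(f has_real_derivative f' z) (at z)" if "z \<in> {x..y}" for z
    using deriv that by blast
  have cont: "continuous_on {x..y} f"
    using deriv_xy by (intro continuous_at_imp_continuous_on ballI DERIV_isCont)
  have diff: "f differentiable (at z)" if "x < z" "z < y" for z
    using deriv_xy[of z] that unfolding real_differentiable_def by force
  show "f x \<noteq> f y"
  proof
    assume "f x = f y"
    then obtain z where z: "x < z" "z < y" and "(f has_real_derivative 0) (at z)"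
      using Rolle[OF \<open>x < y\<close> _ cont diff] by blast
    then have "f' z = 0"
      using deriv_xy[of z] DERIV_unique by force
    moreover have "z \<in> S"
      using sub z by auto
    ultimately show False
      using nonzero by blast
  qed
qed

theorem lemmaB1:
  fixes T T' :: "real \<Rightarrow> real" and a b :: real
  assumes maps: "\<forall>x\<in>{0..1}. T x \<in> {0..1}"
    and udp: "unif_preserving T"
    and ab: "0 \<le> a" "b \<le> 1"
    and deriv: "\<forall>x\<in>{a<..<b}. (T has_real_derivative T' x) (at x)"
    and cont: "continuous_on {a<..<b} T'"
  shows "(\<forall>x\<in>{a<..<b}. T' x \<noteq> 0) \<and> (strict_mono_on {a<..<b} T \<or> strict_antimono_on {a<..<b} T)"
proof -
  have nonzero: "\<forall>x\<in>{a<..<b}. T' x \<noteq> 0"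
  proof
    fix x assume "x \<in> {a<..<b}"
    then have "1 \<le> \<bar>T' x\<bar>"
      using ab deriv by (intro unif_preserving_DERIV_abs_ge_1[OF udp]) auto
    then show "T' x \<noteq> 0"
      by auto
  qed
  have "inj_on T {a<..<b}"
    using deriv nonzero by (intro inj_on_if_DERIV_nonzero) auto
  moreover have "continuous_on {a<..<b} T"
    using deriv by (intro continuous_at_imp_continuous_on ballI DERIV_isCont) auto
  ultimately show ?thesis
    using nonzero injective_eq_monotone_map[of "{a<..<b}" T] by simp
qed

end
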